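(* In the setting and Algorithm 1 described in the context, for every iteration $k\in\{1,\dots,T\}$, every realization of the random choices in iterations $1,\dots,k-1$, and every $i\in[n]$, letting $y^{(i)}_k$ denote the value of $y_k$ obtained when coordinate $i$ is selected in iteration $k$, we have $$f_\mu(x_k)-f_\mu(y^{(i)}_k)\geq\frac12\langle\nabla f_\mu(x_k),\,x_k-y^{(i)}_k\rangle.$$
   Context: Setting: $A\in\mathbb{R}^{m\times n}_{\geq 0}$ has every column nonzero; $\|A_{:i}\|_\infty$ is the largest entry of column $i$. Let $\epsilon\in(0,1)$, $\mu=\frac{\epsilon}{4\log(nm/\epsilon)}$, $L=4/\mu$, $f_\mu(x)=\vec 1^Tx+\mu\sum_{j=1}^m\exp(\frac1\mu(1-(Ax)_j))$, $\Delta=\{x: 0\leq x_i\leq 3/\|A_{:i}\|_\infty\ \forall i\}$, and for $x,y\in\mathbb{R}^n$ let $V_x(y)=\frac12\sum_i\|A_{:i}\|_\infty(x_i-y_i)^2$. Algorithm 1 (input $A$, a starting point $x^{\mathrm{start}}\in\Delta$, $f_\mu$, $\epsilon$): set $\tau=\frac{1}{8nL}$, $T=\lceil 8nL\log(1/\epsilon)\rceil$, $x_0=y_0=z_0=x^{\mathrm{start}}$, $\alpha_0=\frac1{nL}$. For $k=1,\dots,T$: $\alpha_k=\alpha_{k-1}/(1-\tau)$; $x_k=\tau z_{k-1}+(1-\tau)y_{k-1}$; choose $i\in[n]$ uniformly at random; let $\xi_k^{(i)}$ be $\nabla_i f_\mu(x_k)$ truncated to $[-1,1]$; set $z_k=\arg\min_{z\in\Delta}\{V_{z_{k-1}}(z)+n\alpha_k\xi^{(i)}_k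 z_i\}$ (i.e. $z_k$ equals $z_{k-1}$ except its $i$-th coordinate is $z_{k-1,i}-n\alpha_k\xi^{(i)}_k/\|A_{:i}\|_\infty$ projected onto $[0,3/\|A_{:i}\|_\infty]$); set $y_k=x_k+\frac{1}{n\alpha_kL}(z_k-z_{k-1})$. Output $y_T$. *)

theory Defs
  imports "HOL-Analysis.Analysis"
begin

text \<open>Conventions: the matrix A is m x n, given as a function A :: nat => nat => real,
  A j i being the entry in row j (j < m) and column i (i < n); indices are 0-based.
  Vectors in R^n are functions nat => real, only the components i < n matter.\<close>

definition colmax :: "(nat \<Rightarrow> nat \<Rightarrow> real) \<Rightarrow> nat \<Rightarrow> nat \<Rightarrow> real" where
  "colmax A m i = Max ((\<lambda>j. A j i) ` {..<m})"

definition Amul :: "(nat \<Rightarrow> nat \<Rightarrow> real) \<Rightarrow> nat \<Rightarrow> (nat \<Rightarrow> real) \<Rightarrow> nat \<Rightarrow> real" where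
  "Amul A n x j = (\<Sum>i<n. A j i * x i)"

definition mu_par :: "nat \<Rightarrow> nat \<Rightarrow> real \<Rightarrow> real" where
  "mu_par m n eps = eps / (4 * ln (real n * real m / eps))"

definition L_par :: "nat \<Rightarrow> nat \<Rightarrow> real \<Rightarrow> real" where
  "L_par m n eps = 4 / mu_par m n eps"

definition f_mu :: "(nat \<Rightarrow> nat \<Rightarrow> real) \<Rightarrow> nat \<Rightarrow> nat \<Rightarrow> real \<Rightarrow> (nat \<Rightarrow> real) \<Rightarrow> real" where
  "f_mu A m n mu x = (\<Sum>i<n. x i) + mu * (\<Sum>j<m. exp ((1 - Amul A n x j) / mu))"

definition partial :: "((nat \<Rightarrow> real) \<Rightarrow> real) \<Rightarrow> nat \<Rightarrow> (nat \<Rightarrow> real) \<Rightarrow> real" where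
  "partial g i x = deriv (\<lambda>t. g (x(i := t))) (x i)"

definition Delta :: "(nat \<Rightarrow> nat \<Rightarrow> real) \<Rightarrow> nat \<Rightarrow> nat \<Rightarrow> (nat \<Rightarrow> real) set" where
  "Delta A m n = {x. \<forall>i<n. 0 \<le> x i \<and> x i \<le> 3 / colmax A m i}"

definition clamp :: "real \<Rightarrow> real \<Rightarrow> real \<Rightarrow> real" where
  "clamp lo hi v = max lo (min hi v)"

definition tau_par :: "nat \<Rightarrow> nat \<Rightarrow> real \<Rightarrow> real" where
  "tau_par m n eps = 1 / (8 * real n * L_par m n eps)"

definition alpha_k :: "nat \<Rightarrow> nat \<Rightarrow> real \<Rightarrow> nat \<Rightarrow> real" where
  "alpha_k m n eps k = (1 / (real n * L_par m n eps)) / (1 - tau_par m n eps) ^ k"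

definition T_par :: "nat \<Rightarrow> nat \<Rightarrow> real \<Rightarrow> nat" where
  "T_par m n eps = nat \<lceil>8 * real n * L_par m n eps * ln (1 / eps)\<rceil>"

text \<open>The point x_k computed from (y_{k-1}, z_{k-1}).\<close>
definition x_of :: "nat \<Rightarrow> nat \<Rightarrow> real \<Rightarrow> (nat \<Rightarrow> real) \<times> (nat \<Rightarrow> real) \<Rightarrow> nat \<Rightarrow> real" where
  "x_of m n eps s = (\<lambda>l. tau_par m n eps * snd s l + (1 - tau_par m n eps) * fst s l)"

text \<open>Iteration k of Algorithm 1 with selected coordinate i, mapping (y_{k-1}, z_{k-1})
  to (y_k, z_k).\<close>
definition alg_step :: "(nat \<Rightarrow> nat \<Rightarrow> real) \<Rightarrow> nat \<Rightarrow> nat \<Rightarrow> real \<Rightarrow> nat \<Rightarrow> nat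
    \<Rightarrow> (nat \<Rightarrow> real) \<times> (nat \<Rightarrow> real) \<Rightarrow> (nat \<Rightarrow> real) \<times> (nat \<Rightarrow> real)" where
  "alg_step A m n eps k i s =
    (let mu = mu_par m n eps; L = L_par m n eps; a = alpha_k m n eps k;
         x = x_of m n eps s; z = snd s;
         \<xi> = clamp (-1) 1 (partial (f_mu A m n mu) i x);
         z' = z(i := clamp 0 (3 / colmax A m i) (z i - real n * a * \<xi> / colmax A m i));
         y' = (\<lambda>l. x l + (1 / (real n * a * L)) * (z' l - z l))
     in (y', z'))"

text \<open>State (y_k, z_k) after k iterations, for the choice sequence c (c k = coordinate
  selected in iteration k).\<close>
fun alg_state :: "(nat \<Rightarrow> nat \<Rightarrow> real) \<Rightarrow> nat \<Rightarrow> nat \<Rightarrow> real \<Rightarrow> (nat \<Rightarrow> real) \<Rightarrow> (nat \<Rightarrow> nat)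
    \<Rightarrow> nat \<Rightarrow> (nat \<Rightarrow> real) \<times> (nat \<Rightarrow> real)" where
  "alg_state A m n eps xs c 0 = (xs, xs)"
| "alg_state A m n eps xs c (Suc k) = alg_step A m n eps (Suc k) (c (Suc k)) (alg_state A m n eps xs c k)"

end

theory Submission
  imports Defs
begin

text \<open>Selecting coordinate i moves x only along e_i. Projecting z onto the box shrinks
  the mirror step -n alpha xi/C (C the largest entry of column i, xi the truncated partial
  derivative g) by a factor theta in [0,1], and L = 4/mu, so y = x - t e_i with
  t = theta xi mu/(4C). Every exponent of f_mu then moves by at most 1/4, and
  exp u \<le> 1 + u + u^2 gives f(y) - f(x) \<le> -g t + C p t^2/mu, where p = 1 - g \<ge> 0.
  After substituting t the claim reduces to xi^2 p \<le> 2 g xi, which holds for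
  xi = max (-1) g.\<close>

lemma exp_le_quadratic:
  fixes u :: real
  assumes "\<bar>u\<bar> \<le> 1"
  shows "exp u \<le> 1 + u + u\<^sup>2"
proof (cases "0 \<le> u")
  case True
  then show ?thesis using exp_bound assms by simp
next
  case False
  have "exp u * (1 - u) \<le> exp u * exp (- u)"
    using exp_ge_add_one_self[of "- u"] by (intro mult_left_mono) auto
  also have "\<dots> = 1"
    by (simp add: exp_minus)
  also have "1 \<le> 1 - u ^ 3"
    using False by (simp add: power3_eq_cube mult_nonneg_nonpos)
  also have "1 - u ^ 3 = (1 + u + u\<^sup>2) * (1 - u)"
    by (simp add: algebra_simps power2_eq_square power3_eq_cube)
  finally show ?thesis
    using False by (simp add: mult_le_cancel_right)
qed

lemma sum_exp_shift_le:
  fixes a b :: "nat \<Rightarrow> real"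
  assumes mu: "0 < mu" and a: "\<forall>j<m. 0 \<le> a j \<and> a j \<le> C" and t: "C * \<bar>t\<bar> \<le> mu"
  defines "p \<equiv> \<Sum>j<m. a j * exp (b j)"
  shows "mu * (\<Sum>j<m. exp (b j + a j * t / mu))
           \<le> mu * (\<Sum>j<m. exp (b j)) + t * p + t\<^sup>2 / mu * C * p"
proof -
  have term_le: "mu * exp (b j + a j * t / mu)
      \<le> mu * exp (b j) + t * (a j * exp (b j)) + t\<^sup>2 / mu * C * (a j * exp (b j))"
    if j: "j < m" for j
  proof -
    have "\<bar>a j * t\<bar> \<le> C * \<bar>t\<bar>"
      using a j by (simp add: abs_mult mult_right_mono)
    then have "\<bar>a j * t / mu\<bar> \<le> 1"
      using mu t by simp
    then have "mu * exp (b j + a j * t / mu)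
        \<le> mu * (exp (b j) * (1 + a j * t / mu + (a j * t / mu)\<^sup>2))"
      using mu exp_le_quadratic by (simp add: exp_add)
    also have "\<dots> = mu * exp (b j) + t * (a j * exp (b j)) + t\<^sup>2 / mu * a j * (a j * exp (b j))"
      using mu by (simp add: field_simps power2_eq_square)
    also have "t\<^sup>2 / mu * a j * (a j * exp (b j)) \<le> t\<^sup>2 / mu * C * (a j * exp (b j))"
      using a j mu by (intro mult_right_mono mult_left_mono) auto
    finally show ?thesis by simp
  qed
  have "mu * (\<Sum>j<m. exp (b j + a j * t / mu))
      \<le> (\<Sum>j<m. mu * exp (b j) + t * (a j * exp (b j)) + t\<^sup>2 / mu * C * (a j * exp (b j)))"
    unfolding sum_distrib_left by (intro sum_mono term_le) simp
  also have "\<dots> = mu * (\<Sum>j<m. exp (b j)) + t * p + t\<^sup>2 / mu * C * p"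
    by (simp add: p_def sum.distrib sum_distrib_left)
  finally show ?thesis .
qed

lemma clamp_sq_mul_le:
  fixes g :: real
  assumes "g \<le> 1"
  shows "(clamp (-1) 1 g)\<^sup>2 * (1 - g) \<le> 2 * g * clamp (-1) 1 g"
proof (cases "g < -1")
  case True
  then show ?thesis by (simp add: clamp_def)
next
  case False
  then have "g\<^sup>2 * (1 - g) \<le> g\<^sup>2 * 2"
    by (intro mult_left_mono) auto
  then show ?thesis
    using False assms by (simp add: clamp_def power2_eq_square)
qed

lemma clamp_sub_eq_scaled:
  fixes lo hi z v :: real
  assumes "lo \<le> z" "z \<le> hi"
  obtains \<theta> where "0 \<le> \<theta>" "\<theta> \<le> 1" "clamp lo hi v - z = \<theta> * (v - z)"
proof -
  have "clamp lo hi v \<in> closed_segment z v"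
    using assms by (auto simp: closed_segment_eq_real_ivl clamp_def)
  then show ?thesis
    using that by (auto simp: closed_segment_real_eq algebra_simps)
qed

lemma sum_fun_upd_lessThan:
  fixes x :: "nat \<Rightarrow> 'a::ab_group_add"
  assumes "i < n"
  shows "(\<Sum>l<n. (x(i := t)) l) = (\<Sum>l<n. x l) + (t - x i)"
proof -
  have "(\<Sum>l<n. (x(i := t)) l) = (\<Sum>l<n. x l + (if l = i then t - x i else 0))"
    by (intro sum.cong) auto
  then show ?thesis
    using assms by (simp add: sum.distrib)
qed

lemma sum_mul_diff_fun_upd:
  fixes h x :: "nat \<Rightarrow> real"
  assumes "i < n"
  shows "(\<Sum>l<n. h l * (x l - (x(i := x i - t)) l)) = h i * t"
  using assms by (simp add: if_distrib cong: if_cong)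

lemma Amul_fun_upd:
  assumes "i < n"
  shows "Amul A n (x(i := t)) j = Amul A n x j + A j i * (t - x i)"
  using sum_fun_upd_lessThan[OF assms, of "\<lambda>l. A j l * x l" "A j i * t"]
  by (simp add: Amul_def fun_upd_def if_distrib algebra_simps cong: if_cong)

lemma f_mu_fun_upd:
  assumes "i < n"
  shows "f_mu A m n mu (x(i := x i + d))
    = (\<Sum>l<n. x l) + d + mu * (\<Sum>j<m. exp ((1 - Amul A n x j) / mu - A j i * d / mu))"
proof -
  have "(1 - Amul A n (x(i := x i + d)) j) / mu = (1 - Amul A n x j) / mu - A j i * d / mu" for j
    using assms by (simp add: Amul_fun_upd diff_divide_distrib add_divide_distrib)
  then show ?thesis
    unfolding f_mu_def sum_fun_upd_lessThan[OF assms] by simp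
qed

lemma partial_f_mu:
  assumes "i < n" and "mu \<noteq> 0"
  shows "partial (f_mu A m n mu) i x = 1 - (\<Sum>j<m. A j i * exp ((1 - Amul A n x j) / mu))"
proof -
  have "(\<lambda>t. f_mu A m n mu (x(i := t))) = (\<lambda>t. (\<Sum>l<n. x l) + (t - x i)
      + mu * (\<Sum>j<m. exp ((1 - Amul A n x j) / mu - A j i * (t - x i) / mu)))"
    using f_mu_fun_upd[OF assms(1), of A m mu x] by (metis add.commute diff_add_cancel)
  moreover have "((\<lambda>t. (\<Sum>l<n. x l) + (t - x i)
      + mu * (\<Sum>j<m. exp ((1 - Amul A n x j) / mu - A j i * (t - x i) / mu)))
      has_real_derivative 1 - (\<Sum>j<m. A j i * exp ((1 - Amul A n x j) / mu))) (at (x i))"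
    using assms(2)
    by (auto intro!: derivative_eq_intros simp: sum_distrib_left sum_negf[symmetric] mult.commute)
  ultimately show ?thesis
    unfolding partial_def by (simp add: DERIV_imp_deriv)
qed

lemma f_mu_coordinate_descent:
  fixes A :: "nat \<Rightarrow> nat \<Rightarrow> real" and x :: "nat \<Rightarrow> real"
  assumes mu: "0 < mu" and i: "i < n" and C: "0 < C"
    and col: "\<forall>j<m. 0 \<le> A j i \<and> A j i \<le> C" and \<theta>: "0 \<le> \<theta>" "\<theta> \<le> 1"
  defines "g \<equiv> partial (f_mu A m n mu) i x"
  defines "t \<equiv> \<theta> * clamp (-1) 1 g * mu / (4 * C)"
  shows "1/2 * (\<Sum>l<n. partial (f_mu A m n mu) l x * (x l - (x(i := x i - t)) l))
    \<le> f_mu A m n mu x - f_mu A m n mu (x(i := x i - t))"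
proof -
  define b where "b j = (1 - Amul A n x j) / mu" for j
  define p where "p = (\<Sum>j<m. A j i * exp (b j))"
  define \<xi> where "\<xi> = clamp (-1) 1 g"
  have p: "0 \<le> p"
    unfolding p_def using col by (intro sum_nonneg) auto
  have g: "g = 1 - p"
    unfolding g_def p_def b_def using partial_f_mu[OF i] mu by simp
  have "\<bar>\<xi>\<bar> \<le> 1"
    by (simp add: \<xi>_def clamp_def)
  then have "\<theta> * \<bar>\<xi>\<bar> \<le> 1"
    using \<theta> by (simp add: mult_le_one)
  then have small: "C * \<bar>t\<bar> \<le> mu"
    using mu C \<theta> by (simp add: t_def \<xi>_def[symmetric] abs_mult field_simps)
  have "f_mu A m n mu (x(i := x i - t)) - f_mu A m n mu x
      = - t + mu * (\<Sum>j<m. exp (b j + A j i * t / mu)) - mu * (\<Sum>j<m. exp (b j))"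
    using f_mu_fun_upd[OF i, of A m mu x "- t"] f_mu_fun_upd[OF i, of A m mu x 0]
    by (simp add: b_def)
  also have "\<dots> \<le> - g * t + t\<^sup>2 / mu * C * p"
    using sum_exp_shift_le[OF mu col small, of b] by (simp add: g p_def algebra_simps)
  also have "\<dots> = - g * t / 2 + \<theta> * mu / (16 * C) * (\<theta> * \<xi>\<^sup>2 * p - 2 * g * \<xi>)"
    using mu C by (simp add: t_def \<xi>_def field_simps power2_eq_square)
  also have "\<dots> \<le> - g * t / 2"
  proof -
    have "\<theta> * \<xi>\<^sup>2 * p \<le> \<xi>\<^sup>2 * p"
      using \<theta> p by (simp add: mult_left_le_one_le mult.assoc)
    also have "\<dots> \<le> 2 * g * \<xi>"
      using clamp_sq_mul_le[of g] g p by (simp add: \<xi>_def)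
    finally have "\<theta> * \<xi>\<^sup>2 * p \<le> 2 * g * \<xi>" .
    then have "\<theta> * mu / (16 * C) * (\<theta> * \<xi>\<^sup>2 * p - 2 * g * \<xi>) \<le> 0"
      using mu C \<theta> by (intro mult_nonneg_nonpos) auto
    then show ?thesis by simp
  qed
  finally have "g * t / 2 \<le> f_mu A m n mu x - f_mu A m n mu (x(i := x i - t))"
    by simp
  moreover have "(\<Sum>l<n. partial (f_mu A m n mu) l x * (x l - (x(i := x i - t)) l)) = g * t"
    unfolding g_def by (rule sum_mul_diff_fun_upd[OF i])
  ultimately show ?thesis by simp
qed

lemma colmax_ge: "j < m \<Longrightarrow> A j l \<le> colmax A m l"
  unfolding colmax_def by (intro Max_ge) auto

lemma colmax_pos:
  assumes "\<forall>j<m. 0 \<le> A j l" and "\<exists>j<m. A j l \<noteq> 0"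
  shows "0 < colmax A m l"
  using assms colmax_ge by (metis less_eq_real_def order_less_le_trans)

lemma snd_alg_state_in_Delta:
  assumes nonneg: "\<forall>j<m. \<forall>l<n. 0 \<le> A j l" and m: "0 < m" and start: "xs \<in> Delta A m n"
  shows "snd (alg_state A m n eps xs c k) \<in> Delta A m n"
proof (induction k)
  case 0
  then show ?case using start by simp
next
  case (Suc k)
  have "0 \<le> 3 / colmax A m l" if "l < n" for l
    using colmax_ge[OF m, of A l] nonneg m that
    by (meson divide_nonneg_nonneg order_trans zero_le_numeral)
  then show ?case
    using Suc by (auto simp: Delta_def alg_step_def Let_def clamp_def)
qed

lemma fst_alg_step_eq:
  fixes A :: "nat \<Rightarrow> nat \<Rightarrow> real" and m n k i :: nat and eps :: real
    and s :: "(nat \<Rightarrow> real) \<times> (nat \<Rightarrow> real)"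
  defines "x \<equiv> x_of m n eps s" and "mu \<equiv> mu_par m n eps" and "C \<equiv> colmax A m i"
  defines "\<xi> \<equiv> clamp (-1) 1 (partial (f_mu A m n mu) i x)"
  assumes mu: "0 < mu" and C: "0 < C" and z: "0 \<le> snd s i" "snd s i \<le> 3 / C"
  obtains \<theta> where "0 \<le> \<theta>" "\<theta> \<le> 1"
    "fst (alg_step A m n eps k i s) = x(i := x i - \<theta> * \<xi> * mu / (4 * C))"
proof -
  define a where "a = alpha_k m n eps k"
  define z where "z = snd s"
  obtain \<theta> where \<theta>: "0 \<le> \<theta>" "\<theta> \<le> 1"
    and proj: "clamp 0 (3 / C) (z i - real n * a * \<xi> / C) - z i = \<theta> * (- (real n * a * \<xi> / C))"
    using clamp_sub_eq_scaled[OF z, of "z i - real n * a * \<xi> / C"] by (auto simp: z_def)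
  have y: "fst (alg_step A m n eps k i s) = x(i := x i
      + (clamp 0 (3 / C) (z i - real n * a * \<xi> / C) - z i) / (real n * a * L_par m n eps))"
    by (auto simp: alg_step_def Let_def x_def mu_def C_def \<xi>_def a_def z_def)
  show ?thesis
  proof (cases "real n * a = 0")
    case True
    \<comment> \<open>junk case: alpha_k is a division by 0 when tau = 1; then y = x\<close>
    then have "real n * a * L_par m n eps = 0" by simp
    then have "fst (alg_step A m n eps k i s) = x"
      unfolding y by (simp only: div_by_0 add_0_right fun_upd_triv)
    then show ?thesis using that[of 0] by simp
  next
    case False
    then have "(clamp 0 (3 / C) (z i - real n * a * \<xi> / C) - z i) / (real n * a * L_par m n eps)
        = - (\<theta> * \<xi> * mu / (4 * C))"
      unfolding proj using mu C by (simp add: L_par_def mu_def[symmetric] field_simps)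
    then show ?thesis
      using that[OF \<theta>] y by simp
  qed
qed

lemma mu_par_pos:
  assumes "0 < eps" "eps < 1" "0 < n" "0 < m"
  shows "0 < mu_par m n eps"
proof -
  have "1 \<le> n * m"
    using assms(3,4) by (simp add: Suc_le_eq)
  then have "1 \<le> real n * real m"
    by (metis of_nat_1 of_nat_le_iff of_nat_mult)
  then have "1 < real n * real m / eps"
    using assms(1,2) by (simp add: field_simps)
  then show ?thesis
    using assms(1) by (simp add: mu_par_def)
qed

theorem lemma9:
  fixes A :: "nat \<Rightarrow> nat \<Rightarrow> real" and m n :: nat and eps :: real
    and xs :: "nat \<Rightarrow> real" and c :: "nat \<Rightarrow> nat" and k i :: nat
  assumes nonneg: "\<forall>j<m. \<forall>l<n. A j l \<ge> 0"
    and cols: "\<forall>l<n. \<exists>j<m. A j l \<noteq> 0"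
    and eps: "0 < eps" "eps < 1"
    and start: "xs \<in> Delta A m n"
    and k: "1 \<le> k" "k \<le> T_par m n eps"
    and choices: "\<forall>j. 1 \<le> j \<and> j < k \<longrightarrow> c j < n"
    and i: "i < n"
  shows "let mu = mu_par m n eps; f = f_mu A m n mu;
             s = alg_state A m n eps xs c (k - 1);
             x = x_of m n eps s;
             y = fst (alg_step A m n eps k i s)
         in f x - f y \<ge> 1/2 * (\<Sum>l<n. partial f l x * (x l - y l))"
proof -
  have m: "0 < m"
    using cols i by auto
  define C where "C = colmax A m i"
  have col: "\<forall>j<m. 0 \<le> A j i \<and> A j i \<le> C" and C: "0 < C"
    using nonneg cols i colmax_ge colmax_pos by (auto simp: C_def)
  define mu where "mu = mu_par m n eps"
  have mu: "0 < mu"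
    using mu_par_pos[OF eps] i m by (simp add: mu_def)
  define f where "f = f_mu A m n mu"
  define s where "s = alg_state A m n eps xs c (k - 1)"
  define x where "x = x_of m n eps s"
  \<comment> \<open>the box invariant holds for every choice sequence, so k and the earlier choices
    need no constraints\<close>
  have "snd s \<in> Delta A m n"
    unfolding s_def by (rule snd_alg_state_in_Delta[OF nonneg m start])
  then have "0 \<le> snd s i" "snd s i \<le> 3 / C"
    using i by (auto simp: Delta_def C_def)
  then obtain \<theta> where \<theta>: "0 \<le> \<theta>" "\<theta> \<le> 1" and y: "fst (alg_step A m n eps k i s)
      = x(i := x i - \<theta> * clamp (-1) 1 (partial f i x) * mu / (4 * C))"
    using fst_alg_step_eq[of m n eps A i s k] mu C by (auto simp: x_def f_def mu_def C_def)
  show ?thesis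
    using f_mu_coordinate_descent[where A = A and m = m and x = x, OF mu i C col \<theta>]
    unfolding Let_def mu_def[symmetric] f_def[symmetric] s_def[symmetric] x_def[symmetric] y
    by simp
qed

end
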